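(* Let $P,Q,R_0,R_1$ be integers with $PQ\neq 0$, $\Delta:=P^2-4Q\neq 0$, $|R_0|+|R_1|>0$ and $\gcd(P,Q)=\gcd(R_1,Q)=1$, and let $(R_n)_{n\ge 0}$ be defined by $R_{n+2}=PR_{n+1}-QR_n$ for all $n\geq 0$. Assume $\alpha/\beta$ is not a root of unity, where $\alpha,\beta$ are the roots of $x^2-Px+Q$. Let $n$ and $k$ be positive integers with $n\geq k$. Then the integer $L_{k,n}:=\mathrm{lcm}(R_k,R_{k+1},\dots,R_n)$ is a multiple of the rational number \[\frac{R_kR_{k+1}\cdots R_n}{[n-k]_{\boldsymbol{U}}!\,\left(\gcd(R_0,R_1)\right)^{n-k}},\] i.e. $L_{k,n}$ divided by this rational number is an integer.
   Context: $\alpha,\beta$ are the two distinct roots of $x^2-Px+Q$, labelled so that $|\alpha|\ge|\beta|$. The Lucas sequence is $U_n=(\alpha^n-\beta^n)/(\alpha-\beta)$ ($n\ge 0$), equivalently $U_0=0,U_1=1,U_{n+2}=PU_{n+1}-QU_n$. For $j\ge 0$, $[j]_{\boldsymbol{U}}!:=U_1U_2\cdots U_j$ with $[0]_{\boldsymbol{U}}!=1$. *)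

theory Defs
  imports Complex_Main
begin

fun lrec :: "int \<Rightarrow> int \<Rightarrow> int \<Rightarrow> int \<Rightarrow> nat \<Rightarrow> int" where
  "lrec P Q R0 R1 0 = R0"
| "lrec P Q R0 R1 (Suc 0) = R1"
| "lrec P Q R0 R1 (Suc (Suc n)) = P * lrec P Q R0 R1 (Suc n) - Q * lrec P Q R0 R1 n"

definition lucasU :: "int \<Rightarrow> int \<Rightarrow> nat \<Rightarrow> int" where
  "lucasU P Q n = lrec P Q 0 1 n"

definition lucas_fact :: "int \<Rightarrow> int \<Rightarrow> nat \<Rightarrow> int" where
  "lucas_fact P Q j = (\<Prod>i = 1..j. lucasU P Q i)"

end

theory Submission
  imports Defs "HOL-Computational_Algebra.Primes"
begin

text \<open>Write \<open>R\<^sub>n = g S\<^sub>n\<close> with \<open>g = gcd R\<^sub>0 R\<^sub>1\<close>. The addition formula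
\<open>S\<^sub>i\<^sub>+\<^sub>m\<^sub>+\<^sub>1 = S\<^sub>i\<^sub>+\<^sub>1 U\<^sub>m\<^sub>+\<^sub>1 - Q S\<^sub>i U\<^sub>m\<close> together with the coprimality of consecutive terms
shows that a number dividing \<open>S\<^sub>i\<close> and \<open>S\<^sub>j\<close> (\<open>i < j\<close>) divides \<open>U\<^sub>j\<^sub>-\<^sub>i\<close>. Hence, for every
prime power \<open>p\<^sup>e\<close>, at most \<open>1 + #{d \<le> n - k. p\<^sup>e | U\<^sub>d}\<close> of the terms \<open>S\<^sub>k, \<dots>, S\<^sub>n\<close> are divisible
by \<open>p\<^sup>e\<close>. Summing over \<open>e \<le> v\<^sub>p(lcm)\<close>, as in Legendre's formula, gives
\<open>v\<^sub>p(S\<^sub>k \<cdots> S\<^sub>n) \<le> v\<^sub>p([n-k]\<^sub>U!) + v\<^sub>p(lcm(S\<^sub>k, \<dots>, S\<^sub>n))\<close>.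
Only the coprimality hypotheses and \<open>(R\<^sub>0, R\<^sub>1) \<noteq> (0, 0)\<close> are used: if some \<open>R\<^sub>i\<close> or
\<open>U\<^sub>d\<close> vanishes, the lcm or the Lucas factorial is zero and the divisibility is trivial.\<close>

lemma lrec_eq_lin_comb: "lrec P Q a b n = a * lrec P Q 1 0 n + b * lucasU P Q n"
  unfolding lucasU_def by (induction n rule: induct_nat_012) (simp_all add: algebra_simps)

lemma lrec_1_0_Suc: "lrec P Q 1 0 (Suc n) = - Q * lucasU P Q n"
  unfolding lucasU_def by (induction n rule: induct_nat_012) (simp_all add: algebra_simps)

lemma lrec_scale: "lrec P Q (c * a) (c * b) n = c * lrec P Q a b n"
  by (subst (1 2) lrec_eq_lin_comb) (simp add: algebra_simps)

lemma lrec_shift: "lrec P Q a b (m + i) = lrec P Q (lrec P Q a b i) (lrec P Q a b (Suc i)) m"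
  by (induction m rule: induct_nat_012) simp_all

lemma lrec_add:
  "lrec P Q a b (Suc m + i) = lrec P Q a b (Suc i) * lucasU P Q (Suc m) - Q * lrec P Q a b i * lucasU P Q m"
  by (simp only: lrec_shift lrec_eq_lin_comb[of _ _ "lrec P Q a b i"] lrec_1_0_Suc) (simp add: algebra_simps)

lemma coprime_diff_mult_left_iff:
  fixes a b c :: "'a :: ring_gcd"
  shows "coprime (a - c * b) b \<longleftrightarrow> coprime a b"
proof -
  have "gcd b ((- c) * b + a) = gcd b a" by (rule gcd_add_mult)
  then show ?thesis by (simp add: coprime_iff_gcd_eq_1 gcd.commute)
qed

lemma coprime_lrec_Suc:
  assumes "coprime P Q" "coprime b Q"
  shows "coprime (lrec P Q a b (Suc n)) Q"
proof (induction n)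
  case (Suc n)
  then show ?case
    using assms(1) coprime_diff_mult_left_iff[of "P * lrec P Q a b (Suc n)" "lrec P Q a b n" Q]
    by (simp only: lrec.simps mult.commute[of Q] coprime_mult_left_iff)
qed (use assms in simp)

lemma coprime_lrec_consecutive:
  assumes "coprime P Q" "coprime a b" "coprime b Q"
  shows "coprime (lrec P Q a b n) (lrec P Q a b (Suc n))"
proof (induction n)
  case (Suc n)
  have "coprime (Q * lrec P Q a b n) (lrec P Q a b (Suc n))"
    using Suc coprime_lrec_Suc[OF assms(1,3)] by (simp add: coprime_commute)
  then have "coprime (- (Q * lrec P Q a b n - P * lrec P Q a b (Suc n))) (lrec P Q a b (Suc n))"
    by (simp only: coprime_minus_left_iff coprime_diff_mult_left_iff)
  then show ?case
    by (simp add: coprime_commute)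
qed (use assms in simp)

lemma dvd_lrec_pair_imp_dvd_lucasU:
  fixes x :: int
  assumes "coprime P Q" "coprime a b" "coprime b Q"
    and "x dvd lrec P Q a b i" "x dvd lrec P Q a b j" "i < j"
  shows "x dvd lucasU P Q (j - i)"
proof -
  let ?R = "lrec P Q a b" and ?U = "lucasU P Q"
  obtain m where j: "j = Suc m + i" using \<open>i < j\<close> less_iff_Suc_add by auto
  have "x dvd ?R j + Q * ?R i * ?U m"
    using assms(4,5) by simp
  then have "x dvd ?R (Suc i) * ?U (Suc m)"
    unfolding j lrec_add by simp
  moreover have "coprime x (?R (Suc i))"
    using coprime_lrec_consecutive[OF assms(1-3)] assms(4) coprime_imp_coprime dvd_trans by blast
  ultimately show ?thesis
    using coprime_dvd_mult_right_iff j by auto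
qed

lemma card_le_card_differences:
  fixes S :: "nat set"
  assumes "S \<subseteq> {k..n}" and "\<And>i j. i \<in> S \<Longrightarrow> j \<in> S \<Longrightarrow> i < j \<Longrightarrow> D (j - i)"
  shows "card S \<le> card {d \<in> {1..n - k}. D d} + 1"
proof (cases "S = {}")
  case False
  have "finite S" using assms(1) finite_subset by blast
  define i0 where "i0 = Min S"
  have i0: "i0 \<in> S" "\<And>i. i \<in> S \<Longrightarrow> i0 \<le> i"
    using \<open>finite S\<close> False by (simp_all add: i0_def)
  have "inj_on (\<lambda>i. i - i0) (S - {i0})"
    using i0(2) by (intro inj_on_diff_nat) blast
  moreover have "i - i0 \<in> {d \<in> {1..n - k}. D d}" if "i \<in> S - {i0}" for i
  proof -
    have "i0 < i" "k \<le> i0" "i \<le> n"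
      using that i0 assms(1) by (auto simp: order_less_le)
    then show ?thesis using assms(2) that i0(1) by auto
  qed
  ultimately have "card (S - {i0}) \<le> card {d \<in> {1..n - k}. D d}"
    by (intro card_inj_on_le) auto
  then show ?thesis
    using card.remove[OF \<open>finite S\<close> i0(1)] by simp
qed simp

lemma card_power_dvd_eq_min_multiplicity:
  fixes p x :: "'a :: factorial_semiring"
  assumes "x \<noteq> 0" "\<not> is_unit p"
  shows "card {e \<in> {1..M}. p ^ e dvd x} = min M (multiplicity p x)"
proof -
  have "{e \<in> {1..M}. p ^ e dvd x} = {1..min M (multiplicity p x)}"
    by (auto simp: power_dvd_iff_le_multiplicity[OF assms])
  then show ?thesis by simp
qed

lemma sum_card_filter_swap:
  assumes "finite A" "finite B"
  shows "(\<Sum>a\<in>A. card {b \<in> B. r a b}) = (\<Sum>b\<in>B. card {a \<in> A. r a b})"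
proof -
  have card_eq: "card {x \<in> X. s x} = (\<Sum>x\<in>X. if s x then 1 else 0)" if "finite X" for X and s :: "_ \<Rightarrow> bool"
    using that by (simp add: sum.inter_filter[symmetric])
  have "(\<Sum>a\<in>A. card {b \<in> B. r a b}) = (\<Sum>a\<in>A. \<Sum>b\<in>B. if r a b then 1 else 0)"
    using assms by (simp add: card_eq)
  also have "\<dots> = (\<Sum>b\<in>B. \<Sum>a\<in>A. if r a b then 1 else 0)"
    by (rule sum.swap)
  also have "\<dots> = (\<Sum>b\<in>B. card {a \<in> A. r a b})"
    using assms by (simp add: card_eq)
  finally show ?thesis .
qed

lemma prod_lrec_dvd_lucas_fact_mult_Lcm:
  assumes "coprime P Q" "coprime a b" "coprime b Q"
  shows "(\<Prod>i = k..n. lrec P Q a b i) dvd lucas_fact P Q (n - k) * Lcm (lrec P Q a b ` {k..n})"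
proof (cases "lucas_fact P Q (n - k) * Lcm (lrec P Q a b ` {k..n}) = 0")
  case False
  let ?R = "lrec P Q a b" and ?U = "lucasU P Q"
  let ?F = "lucas_fact P Q (n - k)" and ?L = "Lcm (?R ` {k..n})"
  have "?F \<noteq> 0" "?L \<noteq> 0" using False by simp_all
  then have R_nz: "\<And>i. i \<in> {k..n} \<Longrightarrow> ?R i \<noteq> 0" and U_nz: "\<And>d. d \<in> {1..n - k} \<Longrightarrow> ?U d \<noteq> 0"
    by (auto simp: lucas_fact_def Lcm_0_iff)
  show ?thesis
  proof (rule multiplicity_le_imp_dvd)
    show "(\<Prod>i = k..n. ?R i) \<noteq> 0" using R_nz by simp
    fix p :: int assume "prime p"
    then have p: "prime_elem p" "\<not> is_unit p" using prime_imp_prime_elem not_prime_unit by blast+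
    define M where "M = multiplicity p ?L"
    have R_le_M: "multiplicity p (?R i) \<le> M" if "i \<in> {k..n}" for i
      unfolding M_def using that \<open>?L \<noteq> 0\<close> by (intro dvd_imp_multiplicity_le) auto
    have "multiplicity p (\<Prod>i = k..n. ?R i) = (\<Sum>i = k..n. multiplicity p (?R i))"
      using R_nz by (intro prime_elem_multiplicity_prod_distrib p) auto
    also have "\<dots> = (\<Sum>i = k..n. card {e \<in> {1..M}. p ^ e dvd ?R i})"
      using R_nz R_le_M card_power_dvd_eq_min_multiplicity[OF _ p(2)]
      by (intro sum.cong refl) (metis min.absorb2)
    also have "\<dots> = (\<Sum>e = 1..M. card {i \<in> {k..n}. p ^ e dvd ?R i})"
      by (rule sum_card_filter_swap) simp_all
    also have "\<dots> \<le> (\<Sum>e = 1..M. card {d \<in> {1..n - k}. p ^ e dvd ?U d} + 1)"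
      using dvd_lrec_pair_imp_dvd_lucasU[OF assms]
      by (intro sum_mono card_le_card_differences) auto
    also have "\<dots> = (\<Sum>e = 1..M. card {d \<in> {1..n - k}. p ^ e dvd ?U d}) + M"
      by (simp only: sum.distrib) simp
    also have "\<dots> = (\<Sum>d = 1..n - k. card {e \<in> {1..M}. p ^ e dvd ?U d}) + M"
      by (subst sum_card_filter_swap) simp_all
    also have "\<dots> \<le> (\<Sum>d = 1..n - k. multiplicity p (?U d)) + M"
      using U_nz card_power_dvd_eq_min_multiplicity[OF _ p(2)]
      by (intro add_mono sum_mono order_refl) (metis min.cobounded2)
    also have "\<dots> = multiplicity p ?F + multiplicity p ?L"
      unfolding M_def lucas_fact_def using U_nz
      by (subst prime_elem_multiplicity_prod_distrib[OF p(1)]) auto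
    also have "\<dots> = multiplicity p (?F * ?L)"
      using \<open>?F \<noteq> 0\<close> \<open>?L \<noteq> 0\<close> by (rule prime_elem_multiplicity_mult_distrib[OF p(1), symmetric])
    finally show "multiplicity p (\<Prod>i = k..n. ?R i) \<le> multiplicity p (?F * ?L)" .
  qed
qed (simp only: dvd_0_right)

lemma prod_lrec_dvd_Lcm_mult:
  assumes "coprime P Q" "coprime R1 Q" "R0 \<noteq> 0 \<or> R1 \<noteq> 0"
  shows "(\<Prod>i = k..n. lrec P Q R0 R1 i)
           dvd Lcm (lrec P Q R0 R1 ` {k..n}) * (lucas_fact P Q (n - k) * gcd R0 R1 ^ (n - k))"
proof (cases "k \<le> n")
  case True
  define g where "g = gcd R0 R1"
  define a where "a = R0 div g"
  define b where "b = R1 div g"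
  let ?R = "lrec P Q R0 R1" and ?S = "lrec P Q a b" and ?F = "lucas_fact P Q (n - k)"
  have "g > 0" using assms(3) by (simp add: g_def)
  have R0: "R0 = g * a" and R1: "R1 = g * b" by (simp_all add: a_def b_def g_def)
  have "coprime a b"
    using \<open>g > 0\<close> unfolding a_def b_def g_def by (intro div_gcd_coprime) auto
  moreover have "coprime b Q" using assms(2) R1 by simp
  ultimately have S_dvd: "(\<Prod>i = k..n. ?S i) dvd ?F * Lcm (?S ` {k..n})"
    by (rule prod_lrec_dvd_lucas_fact_mult_Lcm[OF assms(1)])
  have R_eq: "?R i = g * ?S i" for i
    unfolding R0 R1 by (rule lrec_scale)
  have "Lcm (?R ` {k..n}) = Lcm ((*) g ` ?S ` {k..n})"
    unfolding R_eq image_image ..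
  also have "\<dots> = g * Lcm (?S ` {k..n})"
    using True \<open>g > 0\<close> by (subst Lcm_mult) (auto simp: normalize_mult)
  finally have L_eq: "Lcm (?R ` {k..n}) = g * Lcm (?S ` {k..n})" .
  have "(\<Prod>i = k..n. ?R i) = g ^ Suc (n - k) * (\<Prod>i = k..n. ?S i)"
    using True by (simp add: R_eq prod.distrib Suc_diff_le)
  also have "\<dots> dvd g ^ Suc (n - k) * (?F * Lcm (?S ` {k..n}))"
    using S_dvd by (rule mult_dvd_mono[OF dvd_refl])
  also have "\<dots> = Lcm (?R ` {k..n}) * (?F * g ^ (n - k))"
    by (simp add: L_eq algebra_simps)
  finally show ?thesis unfolding g_def .
qed (simp add: lucas_fact_def)

theorem theorem1:
  fixes P Q R0 R1 :: int and \<alpha> \<beta> :: complex and n k :: nat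
  assumes "P * Q \<noteq> 0"
    and "P^2 - 4 * Q \<noteq> 0"
    and "\<bar>R0\<bar> + \<bar>R1\<bar> > 0"
    and "gcd P Q = 1" and "gcd R1 Q = 1"
    and "\<alpha> + \<beta> = of_int P" and "\<alpha> * \<beta> = of_int Q"
    and "\<forall>m::nat. m > 0 \<longrightarrow> (\<alpha> / \<beta>) ^ m \<noteq> 1"
    and "k > 0" and "n \<ge> k"
  shows "(of_int (Lcm (lrec P Q R0 R1 ` {k..n})) :: rat)
           / (of_int (\<Prod>i = k..n. lrec P Q R0 R1 i)
              / (of_int (lucas_fact P Q (n - k)) * of_int (gcd R0 R1) ^ (n - k)))
         \<in> \<int>"
proof -
  have "(\<Prod>i = k..n. lrec P Q R0 R1 i)
          dvd Lcm (lrec P Q R0 R1 ` {k..n}) * (lucas_fact P Q (n - k) * gcd R0 R1 ^ (n - k))"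
    using assms(3-5) by (intro prod_lrec_dvd_Lcm_mult) (auto simp: coprime_iff_gcd_eq_1)
  then have "(of_int (Lcm (lrec P Q R0 R1 ` {k..n}) * (lucas_fact P Q (n - k) * gcd R0 R1 ^ (n - k))) :: rat)
               / of_int (\<Prod>i = k..n. lrec P Q R0 R1 i) \<in> \<int>"
    by (rule of_int_divide_in_Ints)
  then show ?thesis by simp
qed

end
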